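(* Let $\lambda$ be an infinite cardinal. (1) There is a map $d:\mathrm{cf}(\lambda)\times\lambda^+\to\lambda$ such that $E^{\lambda^+}_{<\mathrm{cf}(\lambda)}\subseteq A(d)$. (2) If $\mathrm{ADS}_\lambda$ holds, then there is a map $d:\mathrm{cf}(\lambda)\times\lambda^+\to\lambda$ such that $E^{\lambda^+}_{\neq\mathrm{cf}(\lambda)}\subseteq A(d)$. (3) If $\lambda$ is singular and $\vec f=\langle f_\beta\mid\beta<\lambda^+\rangle$ is a scale for $\lambda$, then there is a map $d:\mathrm{cf}(\lambda)\times\lambda^+\to\lambda$ such that $G(\vec f)\subseteq A(d)$. (4) If $(\aleph_{\omega+1},\aleph_\omega)\twoheadrightarrow(\aleph_1,\aleph_0)$ holds, then for every map $d:\aleph_0\times\aleph_{\omega+1}\to\aleph_\omega$, the set $E^{\aleph_{\omega+1}}_{\aleph_1}\setminus A(d)$ is stationary.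
   Context: $E^\kappa_{<\mu}$, $E^\kappa_{\neq\mu}$, $E^\kappa_\mu$ denote the sets of $\alpha<\kappa$ with cofinality $<\mu$, $\neq\mu$, $=\mu$ respectively. For an ordinal $\delta$, a regular uncountable $\kappa$ and a map $d:\delta\times\kappa\to\lambda$, $A(d)$ is the set of all $\alpha<\kappa$ such that for every cofinal $B\subseteq\alpha$ there exist $\eta\in\delta\cap\alpha$ and a cofinal $B'\subseteq B$ on which $\beta\mapsto d(\eta,\beta)$ is injective. $\mathrm{ADS}_\lambda$ asserts the existence of a sequence $\langle A_\beta\mid\beta<\lambda^+\rangle$ of cofinal subsets of $\lambda$ such that for every $\alpha<\lambda^+$ there is $f_\alpha:\alpha\to\lambda$ with $\langle A_\beta\setminus f_\alpha(\beta)\mid\beta<\alpha\rangle$ pairwise disjoint. For singular $\lambda$, a scale is a sequence $\langle f_\beta\mid\beta<\lambda^+\rangle$ in $\prod_{i<\mathrm{cf}(\lambda)}\lambda_i$, for some increasing sequence of regular cardinals $\langle\lambda_i\mid i<\mathrm{cf}(\lambda)\rangle$ cofinal in $\lambda$, which is increasing and cofinal modulo the ideal of bounded subsets of $\mathrm{cf}(\lambda)$. $G(\vec f)$ is the set of all $\alpha\in E^{\lambda^+}_{\neq\mathrm{cf}(\lambda)}$ for which there are a cofinal $A\subseteq\alpha$ and $i<\mathrm{cf}(\lambda)$ such that $f_\gamma(j)<f_\delta(j)$ for all $\gamma<\delta$ in $A$ and all $j\in[i,\mathrm{cf}(\lambda))$. $(\aleph_{\omega+1},\aleph_\omega)\twoheadrightarrow(\aleph_1,\aleph_0)$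 is Chang's conjecture: every structure on $\aleph_{\omega+1}$ in a countable language has an elementary substructure of size $\aleph_1$ whose intersection with $\aleph_\omega$ is countable. *)

theory Defs
  imports Main "HOL-Library.Equipollence" "HOL-Library.Countable_Set"
begin

text \<open>Ordinals are modelled as the elements of an arbitrary well-ordered type 'o.
  An element a stands for the ordinal given by its set of predecessors seg a.\<close>

definition seg :: "'o::wellorder \<Rightarrow> 'o set" where
  "seg a = {x. x < a}"

definition cofinal_in :: "'o::wellorder set \<Rightarrow> 'o \<Rightarrow> bool" where
  "cofinal_in B a \<longleftrightarrow> B \<subseteq> seg a \<and> (\<forall>x<a. \<exists>y\<in>B. x \<le> y)"

definition is_limit :: "'o::wellorder \<Rightarrow> bool" where
  "is_limit a \<longleftrightarrow> (\<exists>x. x < a) \<and> (\<forall>x<a. \<exists>y<a. x < y)"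

definition cf :: "'o::wellorder \<Rightarrow> 'o" where
  "cf a = (LEAST c. \<exists>B. cofinal_in B a \<and> B \<approx> seg c)"

definition is_card :: "'o::wellorder \<Rightarrow> bool" where
  "is_card a \<longleftrightarrow> (\<forall>b<a. \<not> seg b \<approx> seg a)"

definition inf_card :: "'o::wellorder \<Rightarrow> bool" where
  "inf_card a \<longleftrightarrow> is_card a \<and> infinite (seg a)"

definition regular_card :: "'o::wellorder \<Rightarrow> bool" where
  "regular_card a \<longleftrightarrow> inf_card a \<and> cf a = a"

definition singular_card :: "'o::wellorder \<Rightarrow> bool" where
  "singular_card a \<longleftrightarrow> inf_card a \<and> cf a \<noteq> a"

definition is_csucc :: "'o::wellorder \<Rightarrow> 'o \<Rightarrow> bool" where
  "is_csucc l k \<longleftrightarrow> seg l \<prec> seg k \<and> (\<forall>c<k. seg c \<lesssim> seg l)"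

definition is_omega :: "'o::wellorder \<Rightarrow> bool" where
  "is_omega w \<longleftrightarrow> infinite (seg w) \<and> (\<forall>c<w. finite (seg c))"

definition is_aleph_omega :: "'o::wellorder \<Rightarrow> bool" where
  "is_aleph_omega m \<longleftrightarrow> infinite {b. b < m \<and> inf_card b}
     \<and> (\<forall>c<m. finite {b. b < c \<and> inf_card b})"

definition E_less :: "'o::wellorder \<Rightarrow> 'o \<Rightarrow> 'o set" where
  "E_less k m = {a. a < k \<and> is_limit a \<and> cf a < m}"

definition E_neq :: "'o::wellorder \<Rightarrow> 'o \<Rightarrow> 'o set" where
  "E_neq k m = {a. a < k \<and> is_limit a \<and> cf a \<noteq> m}"

definition E_eq :: "'o::wellorder \<Rightarrow> 'o \<Rightarrow> 'o set" where
  "E_eq k m = {a. a < k \<and> is_limit a \<and> cf a = m}"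

definition is_map :: "('o::wellorder \<Rightarrow> 'o \<Rightarrow> 'o) \<Rightarrow> 'o \<Rightarrow> 'o \<Rightarrow> 'o \<Rightarrow> bool" where
  "is_map d delta k l \<longleftrightarrow> (\<forall>\<eta><delta. \<forall>\<beta><k. d \<eta> \<beta> < l)"

definition A_set :: "'o::wellorder \<Rightarrow> 'o \<Rightarrow> ('o \<Rightarrow> 'o \<Rightarrow> 'o) \<Rightarrow> 'o set" where
  "A_set delta k d = {a. a < k \<and> (\<forall>B. cofinal_in B a \<longrightarrow>
      (\<exists>\<eta>. \<eta> < delta \<and> \<eta> < a \<and> (\<exists>B'\<subseteq>B. cofinal_in B' a \<and> inj_on (d \<eta>) B')))}"

text \<open>ADS_l, where k = l^+.\<close>
definition ADS :: "'o::wellorder \<Rightarrow> 'o \<Rightarrow> bool" where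
  "ADS l k \<longleftrightarrow> (\<exists>A :: 'o \<Rightarrow> 'o set. (\<forall>\<beta><k. cofinal_in (A \<beta>) l) \<and>
     (\<forall>a<k. \<exists>f :: 'o \<Rightarrow> 'o. (\<forall>\<beta><a. f \<beta> < l) \<and>
        (\<forall>\<beta><a. \<forall>\<gamma><a. \<beta> \<noteq> \<gamma> \<longrightarrow> (A \<beta> - seg (f \<beta>)) \<inter> (A \<gamma> - seg (f \<gamma>)) = {})))"

text \<open>f = <f_beta | beta < k> (f beta i = f_beta(i)) is a scale for singular l, k = l^+.\<close>
definition is_scale :: "'o::wellorder \<Rightarrow> 'o \<Rightarrow> ('o \<Rightarrow> 'o \<Rightarrow> 'o) \<Rightarrow> bool" where
  "is_scale l k f \<longleftrightarrow> (\<exists>ls :: 'o \<Rightarrow> 'o.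
     (\<forall>i<cf l. regular_card (ls i) \<and> ls i < l) \<and>
     (\<forall>i<cf l. \<forall>j<cf l. i < j \<longrightarrow> ls i < ls j) \<and>
     (\<forall>x<l. \<exists>i<cf l. x \<le> ls i) \<and>
     (\<forall>\<beta><k. \<forall>i<cf l. f \<beta> i < ls i) \<and>
     (\<forall>\<beta><k. \<forall>\<gamma><k. \<beta> < \<gamma> \<longrightarrow>
        (\<exists>i<cf l. \<forall>j. i \<le> j \<and> j < cf l \<longrightarrow> f \<beta> j < f \<gamma> j)) \<and>
     (\<forall>g :: 'o \<Rightarrow> 'o. (\<forall>i<cf l. g i < ls i) \<longrightarrow>
        (\<exists>\<beta><k. \<exists>i<cf l. \<forall>j. i \<le> j \<and> j < cf l \<longrightarrow> g j < f \<beta> j)))"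

definition G_set :: "'o::wellorder \<Rightarrow> 'o \<Rightarrow> ('o \<Rightarrow> 'o \<Rightarrow> 'o) \<Rightarrow> 'o set" where
  "G_set l k f = {a \<in> E_neq k (cf l). \<exists>A i. cofinal_in A a \<and> i < cf l \<and>
     (\<forall>\<gamma>\<in>A. \<forall>\<delta>\<in>A. \<gamma> < \<delta> \<longrightarrow> (\<forall>j. i \<le> j \<and> j < cf l \<longrightarrow> f \<gamma> j < f \<delta> j))}"

definition club :: "'o::wellorder \<Rightarrow> 'o set \<Rightarrow> bool" where
  "club k C \<longleftrightarrow> cofinal_in C k \<and>
     (\<forall>a<k. is_limit a \<and> cofinal_in (C \<inter> seg a) a \<longrightarrow> a \<in> C)"

definition stationary :: "'o::wellorder \<Rightarrow> 'o set \<Rightarrow> bool" where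
  "stationary k S \<longleftrightarrow> S \<subseteq> seg k \<and> (\<forall>C. club k C \<longrightarrow> S \<inter> C \<noteq> {})"

text \<open>First-order logic over a countable language: function symbols and relation
  symbols are indexed by nat (each symbol may be applied to argument lists of any length).\<close>
datatype trm = Var nat | Fn nat "trm list"

datatype fm = Eq trm trm | Rel nat "trm list" | Neg fm | Conj fm fm | Ex nat fm

fun eval :: "(nat \<Rightarrow> 'a list \<Rightarrow> 'a) \<Rightarrow> (nat \<Rightarrow> 'a) \<Rightarrow> trm \<Rightarrow> 'a" where
  "eval F s (Var i) = s i"
| "eval F s (Fn n ts) = F n (map (eval F s) ts)"

fun sat :: "'a set \<Rightarrow> (nat \<Rightarrow> 'a list \<Rightarrow> 'a) \<Rightarrow> (nat \<Rightarrow> 'a list \<Rightarrow> bool) \<Rightarrow> fm \<Rightarrow> (nat \<Rightarrow> 'a) \<Rightarrow> bool" where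
  "sat D F R (Eq t u) s = (eval F s t = eval F s u)"
| "sat D F R (Rel n ts) s = R n (map (eval F s) ts)"
| "sat D F R (Neg \<phi>) s = (\<not> sat D F R \<phi> s)"
| "sat D F R (Conj \<phi> \<psi>) s = (sat D F R \<phi> s \<and> sat D F R \<psi> s)"
| "sat D F R (Ex i \<phi>) s = (\<exists>a\<in>D. sat D F R \<phi> (s(i := a)))"

definition is_structure :: "'a set \<Rightarrow> (nat \<Rightarrow> 'a list \<Rightarrow> 'a) \<Rightarrow> bool" where
  "is_structure D F \<longleftrightarrow> D \<noteq> {} \<and> (\<forall>n xs. set xs \<subseteq> D \<longrightarrow> F n xs \<in> D)"

definition elem_sub :: "'a set \<Rightarrow> 'a set \<Rightarrow> (nat \<Rightarrow> 'a list \<Rightarrow> 'a) \<Rightarrow> (nat \<Rightarrow> 'a list \<Rightarrow> bool) \<Rightarrow> bool" where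
  "elem_sub M D F R \<longleftrightarrow> M \<subseteq> D \<and> is_structure M F \<and>
     (\<forall>\<phi> s. range s \<subseteq> M \<longrightarrow> (sat M F R \<phi> s \<longleftrightarrow> sat D F R \<phi> s))"

text \<open>Chang's conjecture (k, m) ->> (a1, aleph_0), with k = aleph_{omega+1},
  m = aleph_omega, a1 = aleph_1.\<close>
definition chang :: "'o::wellorder \<Rightarrow> 'o \<Rightarrow> 'o \<Rightarrow> bool" where
  "chang k m a1 \<longleftrightarrow> (\<forall>F R. is_structure (seg k) F \<longrightarrow>
     (\<exists>M. elem_sub M (seg k) F R \<and> M \<approx> seg a1 \<and> countable (M \<inter> seg m)))"

end

theory Submission
  imports Defs
begin

(* In (1)-(3) the map d is the identity below \<lambda>, and above \<lambda> its rows
  are chosen so that, for \<alpha> in the given set and B cofinal in \<alpha>, some row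
  d(\<eta>, -) is injective on a cofinal subset of B. In (1) the columns d(-, \<beta>) are
  pairwise eventually different (built by recursion along injections of \<beta> into \<lambda>);
  a cofinal subset of \<alpha> of size cf \<alpha> < cf \<lambda> has fewer than cf \<lambda> pairs, so a
  single coordinate separates them all. In (2) d(\<eta>, \<beta>) is the least element of A_\<beta>
  above the \<eta>-th term of a sequence cofinal in \<lambda>, and in (3) d(\<eta>, \<beta>) = f_\<beta>(\<eta>);
  since cf \<alpha> \<noteq> cf \<lambda>, one coordinate \<eta> works for cofinally many \<beta>, placing
  d(\<eta>, \<beta>) in disjoint tails of the A_\<beta>, respectively making it increasing along a
  cofinal set at a good point of the scale.
  For (4), close a Chang substructure N of size \<aleph>_1 with N \<inter> \<aleph>_\<omega> countable under
  the maps d(n, -), under injections of each \<beta> into \<aleph>_\<omega> and under successors in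
  a given club. Initial segments of N are then countable, so sup N has cofinality
  \<aleph>_1 and lies in the club, while a row injective on a cofinal subset would embed
  an uncountable set into N \<inter> \<aleph>_\<omega>.
  Below, \<lambda>, \<lambda>^+, \<omega>, \<aleph>_1 and \<aleph>_\<omega> are l, k, w, a1 and m. *)

lemma seg_iff [simp]: "x \<in> seg a \<longleftrightarrow> x < a"
  unfolding seg_def by simp

lemma seg_mono: "x \<le> y \<Longrightarrow> seg x \<subseteq> seg y"
  unfolding seg_def by auto

lemma cofinal_in_seg: "cofinal_in (seg a) a"
  unfolding cofinal_in_def by auto

lemma cofinal_in_less: "cofinal_in B a \<Longrightarrow> x \<in> B \<Longrightarrow> x < a"
  unfolding cofinal_in_def by auto

lemma cofinal_in_tail:
  assumes "cofinal_in B a" and "l < a"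
  shows "cofinal_in {\<beta>\<in>B. l \<le> \<beta>} a"
  unfolding cofinal_in_def
proof (intro conjI allI impI)
  show "{\<beta>\<in>B. l \<le> \<beta>} \<subseteq> seg a"
    using assms(1) cofinal_in_less by auto
next
  fix x assume "x < a"
  then obtain y where "y \<in> B" "max x l \<le> y"
    using assms unfolding cofinal_in_def by (metis max_less_iff_conj)
  then show "\<exists>y\<in>{\<beta>\<in>B. l \<le> \<beta>}. x \<le> y" by auto
qed

lemma cofinal_in_lepoll_subset:
  assumes B: "cofinal_in B a" and W: "cofinal_in W a"
  shows "\<exists>C\<subseteq>B. cofinal_in C a \<and> C \<lesssim> W"
proof -
  have "\<exists>x\<in>B. w \<le> x" if "w \<in> W" for w
    using that B W unfolding cofinal_in_def by auto
  then obtain up where up: "\<And>w. w \<in> W \<Longrightarrow> up w \<in> B \<and> w \<le> up w" by metis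
  have "cofinal_in (up ` W) a"
    unfolding cofinal_in_def
  proof (intro conjI allI impI)
    show "up ` W \<subseteq> seg a" using up B cofinal_in_less by fastforce
  next
    fix x assume "x < a"
    then obtain w where "w \<in> W" "x \<le> w" using W unfolding cofinal_in_def by blast
    then show "\<exists>y\<in>up ` W. x \<le> y" using up by (meson image_eqI order_trans)
  qed
  moreover have "up ` W \<subseteq> B" using up by auto
  ultimately show ?thesis using image_lepoll by blast
qed

lemma Well_order_le: "Well_order {(x :: 'a::wellorder, y). x \<le> y}"
proof -
  have "{(x :: 'a, y). x \<le> y} - Id = {(x, y). x < y}" by auto
  then have "wf ({(x :: 'a, y). x \<le> y} - Id)" using wf by simp
  moreover have "Field {(x :: 'a, y). x \<le> y} = UNIV" unfolding Field_def by auto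
  ultimately show ?thesis
    unfolding well_order_on_def linear_order_on_def partial_order_on_def
      preorder_on_def refl_on_def trans_on_def antisym_on_def total_on_def
    by auto
qed

text \<open>The initial segment is the order type of X, from the comparability of
  well-orders.\<close>
lemma subset_seg_eqpoll_seg:
  assumes X: "X \<subseteq> seg a"
  shows "\<exists>e\<le>a. X \<approx> seg e"
proof -
  define L :: "'a rel" where "L = {(x, y). x \<le> y}"
  have WL: "Well_order L" unfolding L_def by (rule Well_order_le)
  let ?r1 = "Restr L X" and ?r2 = "Restr L (seg a)"
  have W1: "Well_order ?r1" and W2: "Well_order ?r2" using WL Well_order_Restr by blast+
  have "Refl L" using WL unfolding well_order_on_def linear_order_on_def partial_order_on_def
      preorder_on_def by blast
  moreover have "Field L = UNIV" unfolding L_def Field_def by auto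
  ultimately have F1: "Field ?r1 = X" and F2: "Field ?r2 = seg a"
    using Refl_Field_Restr2 by (metis subset_UNIV)+
  from ordLeq_total[OF W1 W2] show ?thesis
  proof
    assume "(?r1, ?r2) \<in> ordLeq"
    then obtain f where E: "embed ?r1 ?r2 f" unfolding ordLeq_def by blast
    have "wo_rel.ofilter ?r2 (f ` X)" using embed_Field_ofilter[OF W1 W2 E] F1 by simp
    moreover have wr: "wo_rel ?r2" using W2 unfolding wo_rel_def .
    ultimately have "(\<exists>b\<in>seg a. f ` X = underS ?r2 b) \<or> f ` X = seg a"
      using wo_rel.ofilter_underS_Field[OF wr] F2 by simp
    moreover have "\<And>b. b \<in> seg a \<Longrightarrow> underS ?r2 b = seg b"
      unfolding underS_def seg_def L_def by auto
    ultimately obtain e where "e \<le> a" "f ` X = seg e"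
      by (metis less_imp_le order_refl seg_iff)
    moreover have "X \<approx> f ` X"
      using embed_inj_on[OF W1 E] F1 by (simp add: eqpoll_sym inj_on_image_eqpoll_self)
    ultimately show ?thesis by auto
  next
    assume "(?r2, ?r1) \<in> ordLeq"
    then obtain g where E: "embed ?r2 ?r1 g" unfolding ordLeq_def by blast
    have "inj_on g (seg a)" using embed_inj_on[OF W2 E] F2 by simp
    moreover have "g ` seg a \<subseteq> X" using embed_Field[OF E] F1 F2 by simp
    ultimately have "seg a \<lesssim> X" unfolding lepoll_def by blast
    then show ?thesis using X subset_imp_lepoll lepoll_antisym by blast
  qed
qed

definition zero_ord :: "'o::wellorder" where
  "zero_ord = (LEAST x. True)"

lemma zero_ord_less: "x < a \<Longrightarrow> zero_ord < a"
  unfolding zero_ord_def by (metis Least_le le_less_trans)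

lemma infinite_seg_zero_ord_less: "infinite (seg a) \<Longrightarrow> zero_ord < a"
  using zero_ord_less by (metis ex_in_conv finite.emptyI seg_iff)

subsection \<open>Cardinals and cofinality\<close>

lemma cf_cofinal_eqpoll: "\<exists>B. cofinal_in B a \<and> B \<approx> seg (cf a)"
  unfolding cf_def by (rule LeastI[of _ a]) (use cofinal_in_seg in blast)

lemma cf_le: "cf a \<le> a"
  unfolding cf_def by (rule Least_le) (use cofinal_in_seg in blast)

lemma cf_lepoll_cofinal:
  assumes "cofinal_in B a"
  shows "seg (cf a) \<lesssim> B"
proof -
  obtain e where e: "e \<le> a" "B \<approx> seg e"
    using assms subset_seg_eqpoll_seg unfolding cofinal_in_def by blast
  have "cf a \<le> e" unfolding cf_def by (rule Least_le) (use assms e in blast)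
  then have "seg (cf a) \<lesssim> seg e" by (intro subset_imp_lepoll seg_mono)
  also have "seg e \<approx> B" using e eqpoll_sym by blast
  finally show ?thesis .
qed

lemma cofinal_in_subset_eqpoll_cf:
  assumes "cofinal_in B a"
  shows "\<exists>C\<subseteq>B. cofinal_in C a \<and> C \<approx> seg (cf a)"
proof -
  obtain W where W: "cofinal_in W a" "W \<approx> seg (cf a)" using cf_cofinal_eqpoll by blast
  obtain C where C: "C \<subseteq> B" "cofinal_in C a" "C \<lesssim> W"
    using cofinal_in_lepoll_subset[OF assms W(1)] by blast
  have "C \<lesssim> seg (cf a)" using C(3) W(2) lepoll_trans2 by blast
  then show ?thesis using C cf_lepoll_cofinal lepoll_antisym by blast
qed

lemma is_card_cf: "is_card (cf a)"
  unfolding is_card_def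
proof (intro allI impI notI)
  fix b assume b: "b < cf a" and E: "seg b \<approx> seg (cf a)"
  obtain B where B: "cofinal_in B a" "B \<approx> seg (cf a)" using cf_cofinal_eqpoll by blast
  have "B \<approx> seg b" using B(2) E eqpoll_sym eqpoll_trans by blast
  then have "cf a \<le> b" unfolding cf_def by (intro Least_le) (use B in blast)
  then show False using b by simp
qed

lemma is_card_le:
  assumes "is_card x" and "seg x \<lesssim> seg y"
  shows "x \<le> y"
proof (rule ccontr)
  assume "\<not> x \<le> y"
  then have "seg y \<lesssim> seg x" by (intro subset_imp_lepoll seg_mono) simp
  then have "seg y \<approx> seg x" using assms(2) lepoll_antisym by blast
  then show False using assms(1) \<open>\<not> x \<le> y\<close> unfolding is_card_def by auto
qed

lemma is_card_lesspoll: "is_card y \<Longrightarrow> x < y \<Longrightarrow> seg x \<prec> seg y"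
  unfolding lesspoll_def is_card_def by (auto intro!: subset_imp_lepoll seg_mono)

lemma lesspoll_cf_bounded:
  assumes "S \<subseteq> seg a" and "S \<prec> seg (cf a)"
  shows "\<exists>y<a. \<forall>s\<in>S. s < y"
proof (rule ccontr)
  assume "\<not> ?thesis"
  then have "cofinal_in S a"
    using assms(1) unfolding cofinal_in_def by (meson not_le)
  then have "seg (cf a) \<lesssim> S" by (rule cf_lepoll_cofinal)
  then show False using assms(2) lepoll_antisym unfolding lesspoll_def by blast
qed

definition records :: "('o::wellorder \<Rightarrow> 'o) \<Rightarrow> 'o \<Rightarrow> 'o set" where
  "records h \<mu> = {\<xi>. \<xi> < \<mu> \<and> (\<forall>\<zeta><\<xi>. h \<zeta> < h \<xi>)}"

lemma records_mono: "\<rho> \<in> records h \<mu> \<Longrightarrow> \<rho>' \<in> records h \<mu> \<Longrightarrow> \<rho> \<le> \<rho>' \<Longrightarrow> h \<rho> \<le> h \<rho>'"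
  unfolding records_def by (cases "\<rho> = \<rho>'") (auto intro: less_imp_le)

lemma records_cofinal:
  assumes "\<exists>\<xi>0<\<mu>. x \<le> h \<xi>0"
  shows "\<exists>\<xi>\<in>records h \<mu>. x \<le> h \<xi>"
proof -
  define \<xi> where "\<xi> = (LEAST \<xi>. \<xi> < \<mu> \<and> x \<le> h \<xi>)"
  have \<xi>: "\<xi> < \<mu> \<and> x \<le> h \<xi>" unfolding \<xi>_def using assms by (rule LeastI_ex)
  have "h \<zeta> < h \<xi>" if "\<zeta> < \<xi>" for \<zeta>
    using not_less_Least[OF that[unfolded \<xi>_def]] \<xi> that
    unfolding \<xi>_def[symmetric] by (meson le_less_trans less_trans not_le)
  then show ?thesis using \<xi> unfolding records_def by blast
qed

lemma records_unbounded:
  assumes cofinal: "\<And>x. x < a \<Longrightarrow> \<exists>\<xi>\<in>records h (cf a). x \<le> h \<xi>"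
    and h_less: "\<And>\<xi>. \<xi> < cf a \<Longrightarrow> h \<xi> < a" and "\<xi> < cf a"
  shows "\<exists>\<rho>\<in>records h (cf a). \<xi> \<le> \<rho>"
proof (rule ccontr)
  assume "\<not> ?thesis"
  then have "records h (cf a) \<subseteq> seg \<xi>" by (auto simp: not_le)
  have "cofinal_in (h ` records h (cf a)) a"
    unfolding cofinal_in_def using cofinal h_less by (auto simp: records_def)
  then have "seg (cf a) \<lesssim> h ` records h (cf a)" by (rule cf_lepoll_cofinal)
  also have "\<dots> \<lesssim> records h (cf a)" by (rule image_lepoll)
  also have "\<dots> \<lesssim> seg \<xi>" using \<open>records h (cf a) \<subseteq> seg \<xi>\<close> by (rule subset_imp_lepoll)
  finally have "cf a \<le> \<xi>" using is_card_le is_card_cf by blast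
  then show False using \<open>\<xi> < cf a\<close> by simp
qed

text \<open>Regularity of cofinalities: enumerate a cofinal subset of a by h in order type
  cf a. The records of h are still cofinal in a and hence unbounded in cf a, so mapping
  each element of S to the next record turns S into a cofinal subset of a.\<close>
lemma cf_lepoll_cofinal_in_cf:
  assumes S: "cofinal_in S (cf a)"
  shows "seg (cf a) \<lesssim> S"
proof -
  obtain W where W: "cofinal_in W a" "W \<approx> seg (cf a)" using cf_cofinal_eqpoll by blast
  obtain h where h: "bij_betw h (seg (cf a)) W" using W(2) eqpoll_sym unfolding eqpoll_def by blast
  have h_less: "h \<xi> < a" if "\<xi> < cf a" for \<xi>
    using that h W(1) cofinal_in_less unfolding bij_betw_def by fastforce
  have R_cofinal: "\<exists>\<xi>\<in>records h (cf a). x \<le> h \<xi>" if x: "x < a" for x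
  proof (rule records_cofinal)
    obtain w where "w \<in> W" "x \<le> w" using W(1) x unfolding cofinal_in_def by blast
    then show "\<exists>\<xi>0<cf a. x \<le> h \<xi>0" using h unfolding bij_betw_def by auto
  qed
  define r where "r s = (LEAST \<rho>. \<rho> \<in> records h (cf a) \<and> s \<le> \<rho>)" for s
  have r: "r s \<in> records h (cf a) \<and> s \<le> r s" if "s \<in> S" for s
    using records_unbounded[OF R_cofinal h_less] S that cofinal_in_less
    unfolding r_def by (metis (mono_tags, lifting) LeastI)
  have "cofinal_in (h ` r ` S) a"
    unfolding cofinal_in_def
  proof (intro conjI allI impI)
    show "h ` r ` S \<subseteq> seg a" using r h_less unfolding records_def by auto
  next
    fix x assume "x < a"
    then obtain \<xi> where \<xi>: "\<xi> \<in> records h (cf a)" "x \<le> h \<xi>" using R_cofinal by blast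
    then obtain s where s: "s \<in> S" "\<xi> \<le> s" using S unfolding cofinal_in_def records_def by blast
    then have "h \<xi> \<le> h (r s)" using records_mono \<xi>(1) r[OF s(1)] by (meson order_trans)
    then show "\<exists>y\<in>h ` r ` S. x \<le> y" using \<xi> s by (metis image_eqI order_trans)
  qed
  then have "seg (cf a) \<lesssim> h ` r ` S" by (rule cf_lepoll_cofinal)
  also have "\<dots> \<lesssim> r ` S" by (rule image_lepoll)
  also have "\<dots> \<lesssim> S" by (rule image_lepoll)
  finally show ?thesis .
qed

lemma cf_cf [simp]: "cf (cf a) = cf a"
proof (rule antisym)
  show "cf (cf a) \<le> cf a" by (rule cf_le)
  obtain S where "cofinal_in S (cf a)" "S \<approx> seg (cf (cf a))" using cf_cofinal_eqpoll by blast
  then have "seg (cf a) \<lesssim> seg (cf (cf a))"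
    using cf_lepoll_cofinal_in_cf lepoll_trans2 by blast
  then show "cf a \<le> cf (cf a)" using is_card_le is_card_cf by blast
qed

lemma cofinal_in_limit_infinite:
  assumes L: "is_limit a" and B: "cofinal_in B a"
  shows "infinite B"
proof
  assume fin: "finite B"
  obtain x where "x < a" using L unfolding is_limit_def by blast
  then have "B \<noteq> {}" using B unfolding cofinal_in_def by blast
  then have "Max B < a" using fin B cofinal_in_less Max_in by blast
  then obtain z where z: "z < a" "Max B < z" using L unfolding is_limit_def by blast
  then obtain y where "y \<in> B" "z \<le> y" using B unfolding cofinal_in_def by blast
  then show False using z Max_ge[OF fin \<open>y \<in> B\<close>] by simp
qed

lemma infinite_cofinal_is_limit:
  assumes "x < a" and "\<And>B. cofinal_in B a \<Longrightarrow> infinite B"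
  shows "is_limit a"
  unfolding is_limit_def
proof (intro conjI allI impI)
  show "\<exists>x. x < a" using assms(1) by blast
next
  fix y assume "y < a"
  show "\<exists>z<a. y < z"
  proof (rule ccontr)
    assume "\<not> ?thesis"
    then have "x \<le> y" if "x < a" for x using that by (meson not_less)
    then have "cofinal_in {y} a" using \<open>y < a\<close> unfolding cofinal_in_def by auto
    then show False using assms(2) by blast
  qed
qed

lemma limit_infinite_cf: "is_limit a \<Longrightarrow> infinite (seg (cf a))"
  using cf_cofinal_eqpoll[of a] cofinal_in_limit_infinite eqpoll_finite_iff by blast

lemma is_card_infinite_is_limit:
  assumes C: "is_card l" and I: "infinite (seg l)"
  shows "is_limit l"
  unfolding is_limit_def
proof (intro conjI allI impI)
  show "\<exists>x. x < l" using infinite_seg_zero_ord_less[OF I] by blast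
next
  fix x assume x: "x < l"
  show "\<exists>y<l. x < y"
  proof (rule ccontr)
    assume no_above: "\<not> ?thesis"
    have sub: "seg l \<subseteq> insert x (seg x)"
    proof
      fix y assume "y \<in> seg l"
      then have "y \<le> x" using no_above by (meson not_less seg_iff)
      then show "y \<in> insert x (seg x)" by (cases "y = x") auto
    qed
    then have "infinite (seg x)" using I finite_subset by blast
    then have "insert x (seg x) \<approx> seg x" by (rule infinite_insert_eqpoll)
    then have "seg l \<lesssim> seg x" using sub subset_imp_lepoll lepoll_trans2 by blast
    moreover have "seg x \<lesssim> seg l" using x by (intro subset_imp_lepoll seg_mono) simp
    ultimately have "seg x \<approx> seg l" using lepoll_antisym by blast
    then show False using C x unfolding is_card_def by blast
  qed
qed

lemma inf_card_is_limit: "inf_card l \<Longrightarrow> is_limit l"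
  unfolding inf_card_def using is_card_infinite_is_limit by blast

lemma cf_le_if_colour_classes_bounded:
  assumes X: "cofinal_in X a" and g: "\<forall>x\<in>X. g x < \<mu>"
    and bounded: "\<forall>j<\<mu>. \<exists>y<a. \<forall>x\<in>X. g x \<le> j \<longrightarrow> x < y"
  shows "cf a \<le> \<mu>"
proof -
  obtain b where b: "\<And>j. j < \<mu> \<Longrightarrow> b j < a \<and> (\<forall>x\<in>X. g x \<le> j \<longrightarrow> x < b j)"
    using bounded by metis
  have "cofinal_in (b ` seg \<mu>) a"
    unfolding cofinal_in_def
  proof (intro conjI allI impI)
    show "b ` seg \<mu> \<subseteq> seg a" using b by auto
  next
    fix x assume "x < a"
    then obtain x' where x': "x' \<in> X" "x \<le> x'" using X unfolding cofinal_in_def by blast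
    then have "x' < b (g x')" using b g by blast
    moreover have "g x' \<in> seg \<mu>" using g x'(1) by simp
    ultimately show "\<exists>y\<in>b ` seg \<mu>. x \<le> y"
      using x'(2) by (meson image_eqI less_imp_le order_trans)
  qed
  then have "seg (cf a) \<lesssim> b ` seg \<mu>" by (rule cf_lepoll_cofinal)
  also have "\<dots> \<lesssim> seg \<mu>" by (rule image_lepoll)
  finally show ?thesis using is_card_le is_card_cf by blast
qed

lemma cofinal_subset_bounded_colour_small_cf:
  assumes "cf a < cf l" and X: "cofinal_in X a" and g: "\<forall>x\<in>X. g x < cf l"
  shows "\<exists>j<cf l. \<exists>X'\<subseteq>X. cofinal_in X' a \<and> (\<forall>x\<in>X'. g x \<le> j)"
proof -
  obtain C where C: "C \<subseteq> X" "cofinal_in C a" "C \<approx> seg (cf a)"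
    using cofinal_in_subset_eqpoll_cf[OF X] by blast
  have "g ` C \<lesssim> C" by (rule image_lepoll)
  also have "C \<approx> seg (cf a)" by (rule C(3))
  also have "seg (cf a) \<prec> seg (cf (cf l))"
    using is_card_lesspoll[OF is_card_cf \<open>cf a < cf l\<close>] by simp
  finally have "g ` C \<prec> seg (cf (cf l))" .
  moreover have "g ` C \<subseteq> seg (cf l)" using g C(1) by auto
  ultimately obtain j where "j < cf l" "\<forall>s\<in>g ` C. s < j"
    using lesspoll_cf_bounded[of "g ` C" "cf l"] by auto
  then have "\<forall>x\<in>C. g x \<le> j" by auto
  then show ?thesis using C \<open>j < cf l\<close> by blast
qed

text \<open>If no colour class {x. g x \<le> j} is cofinal, their bounds form a cofinal subset of
  a indexed by cf l, so cf a < cf l, and then the fewer than cf l colours on a cofinal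
  subset of size cf a are bounded below cf l.\<close>
lemma cofinal_subset_bounded_colour:
  assumes ne: "cf a \<noteq> cf l" and X: "cofinal_in X a" and g: "\<forall>x\<in>X. g x < cf l"
  shows "\<exists>j<cf l. \<exists>X'\<subseteq>X. cofinal_in X' a \<and> (\<forall>x\<in>X'. g x \<le> j)"
proof (cases "\<exists>j<cf l. cofinal_in {x\<in>X. g x \<le> j} a")
  case True
  then obtain j where "j < cf l" "cofinal_in {x\<in>X. g x \<le> j} a" by blast
  then show ?thesis by (intro exI[of _ j] conjI exI[of _ "{x\<in>X. g x \<le> j}"]) auto
next
  case False
  have "\<exists>y<a. \<forall>x\<in>X. g x \<le> j \<longrightarrow> x < y" if "j < cf l" for j
  proof -
    have "\<not> cofinal_in {x\<in>X. g x \<le> j} a" using False that by blast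
    moreover have "{x\<in>X. g x \<le> j} \<subseteq> seg a" using X cofinal_in_less by auto
    ultimately obtain y where y: "y < a" "\<not> (\<exists>x\<in>{x\<in>X. g x \<le> j}. y \<le> x)"
      unfolding cofinal_in_def by blast
    have "\<forall>x\<in>X. g x \<le> j \<longrightarrow> x < y" using y(2) by (auto simp: not_le)
    then show ?thesis using y(1) by blast
  qed
  then have "cf a \<le> cf l" using cf_le_if_colour_classes_bounded[OF X g] by blast
  then show ?thesis using cofinal_subset_bounded_colour_small_cf[OF _ X g] ne by simp
qed

lemma atMost_lesspoll_infinite_card:
  assumes "is_card \<mu>" and "infinite (seg \<mu>)" and "j < \<mu>"
  shows "{i. i \<le> j} \<prec> seg \<mu>"
proof -
  have atMost: "{i. i \<le> j} = insert j (seg j)" by (auto simp: seg_def)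
  show ?thesis
  proof (cases "finite (seg j)")
    case True
    then have "finite {i. i \<le> j}" unfolding atMost by simp
    then show ?thesis using assms(2) finite_lesspoll_infinite by blast
  next
    case False
    then have "{i. i \<le> j} \<approx> seg j" unfolding atMost by (rule infinite_insert_eqpoll)
    also have "seg j \<prec> seg \<mu>" using is_card_lesspoll assms(1,3) by blast
    finally show ?thesis .
  qed
qed

definition on_tail :: "'o::wellorder \<Rightarrow> ('o \<Rightarrow> bool) \<Rightarrow> bool" where
  "on_tail \<mu> P \<longleftrightarrow> (\<exists>i<\<mu>. \<forall>j. i \<le> j \<and> j < \<mu> \<longrightarrow> P j)"

lemma on_tail_conj:
  assumes "on_tail \<mu> P" and "on_tail \<mu> Q"
  shows "on_tail \<mu> (\<lambda>j. P j \<and> Q j)"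
proof -
  obtain i i' where "i < \<mu>" "i' < \<mu>" "\<forall>j. i \<le> j \<and> j < \<mu> \<longrightarrow> P j" "\<forall>j. i' \<le> j \<and> j < \<mu> \<longrightarrow> Q j"
    using assms unfolding on_tail_def by blast
  then show ?thesis unfolding on_tail_def by (intro exI[of _ "max i i'"]) auto
qed

lemma on_tail_mono: "on_tail \<mu> P \<Longrightarrow> (\<And>j. j < \<mu> \<Longrightarrow> P j \<Longrightarrow> Q j) \<Longrightarrow> on_tail \<mu> Q"
  unfolding on_tail_def by blast

text \<open>b j bounds the first j + 1 terms of an enumeration of a cofinal subset of
  size cf l.\<close>
lemma dominating_sequence:
  assumes "is_limit l"
  shows "\<exists>b. (\<forall>j<cf l. b j < l) \<and> (\<forall>x<l. on_tail (cf l) (\<lambda>j. x < b j))"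
proof -
  obtain W where W: "cofinal_in W l" "W \<approx> seg (cf l)" using cf_cofinal_eqpoll by blast
  obtain h where h: "bij_betw h (seg (cf l)) W"
    using W(2) eqpoll_sym unfolding eqpoll_def by blast
  have "\<exists>y<l. \<forall>i\<le>j. h i < y" if j: "j < cf l" for j
  proof -
    have "h ` {i. i \<le> j} \<subseteq> seg l"
      using h W(1) j cofinal_in_less unfolding bij_betw_def by fastforce
    moreover have "h ` {i. i \<le> j} \<prec> seg (cf l)"
      using image_lepoll atMost_lesspoll_infinite_card[OF is_card_cf limit_infinite_cf[OF assms] j]
      by (rule lesspoll_trans1)
    ultimately show ?thesis using lesspoll_cf_bounded[of "h ` {i. i \<le> j}" l] by auto
  qed
  then obtain b where b: "\<And>j. j < cf l \<Longrightarrow> b j < l \<and> (\<forall>i\<le>j. h i < b j)" by metis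
  have "on_tail (cf l) (\<lambda>j. x < b j)" if "x < l" for x
  proof -
    obtain w where "w \<in> W" "x \<le> w" using W(1) \<open>x < l\<close> unfolding cofinal_in_def by blast
    then obtain i where "i < cf l" "x \<le> h i" using h unfolding bij_betw_def by auto
    then show ?thesis using b unfolding on_tail_def by (meson le_less_trans)
  qed
  then show ?thesis using b by blast
qed

lemma infinite_times_self_eqpoll: "infinite A \<Longrightarrow> A \<times> A \<approx> A"
  unfolding eqpoll_def using card_of_Times_same_infinite card_of_ordIso by blast

lemma csucc_lepoll: "is_csucc l k \<Longrightarrow> c < k \<Longrightarrow> seg c \<lesssim> seg l"
  unfolding is_csucc_def by blast

lemma csucc_less:
  assumes "is_csucc l k"
  shows "l < k"
proof (rule ccontr)
  assume "\<not> l < k"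
  then have "seg k \<lesssim> seg l" by (intro subset_imp_lepoll seg_mono) simp
  then show False using assms lepoll_antisym unfolding is_csucc_def lesspoll_def by blast
qed

lemma csucc_is_card: "is_csucc l k \<Longrightarrow> is_card k"
  unfolding is_card_def is_csucc_def lesspoll_def
  by (meson eqpoll_sym lepoll_antisym lepoll_trans1)

lemma csucc_is_limit: "infinite (seg l) \<Longrightarrow> is_csucc l k \<Longrightarrow> is_limit k"
  using is_card_infinite_is_limit csucc_is_card csucc_less seg_mono finite_subset
  by (metis less_imp_le)

text \<open>An unbounded S would give an injection of k into S \<times> l.\<close>
lemma csucc_bounded:
  assumes l: "infinite (seg l)" and K: "is_csucc l k"
    and S: "S \<subseteq> seg k" "S \<lesssim> seg l"
  shows "\<exists>x<k. \<forall>y\<in>S. y < x"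
proof (rule ccontr)
  assume "\<not> ?thesis"
  then have "\<exists>y\<in>S. x < y" if "x < k" for x
    using that is_limit_def csucc_is_limit[OF l K] by (meson le_less_trans not_less)
  then obtain Y where Y: "\<And>x. x < k \<Longrightarrow> Y x \<in> S \<and> x < Y x" by metis
  have "\<forall>y\<in>S. \<exists>e. inj_on e (seg y) \<and> e ` seg y \<subseteq> seg l"
    using S(1) csucc_lepoll[OF K] unfolding lepoll_def by auto
  then obtain e where e: "\<And>y. y \<in> S \<Longrightarrow> inj_on (e y) (seg y) \<and> e y ` seg y \<subseteq> seg l"
    by metis
  have "inj_on (\<lambda>x. (Y x, e (Y x) x)) (seg k)"
  proof (rule inj_onI)
    fix x x' assume "x \<in> seg k" "x' \<in> seg k" "(Y x, e (Y x) x) = (Y x', e (Y x') x')"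
    then show "x = x'" using Y e by (simp add: inj_on_def) (metis seg_iff)
  qed
  moreover have "(\<lambda>x. (Y x, e (Y x) x)) ` seg k \<subseteq> S \<times> seg l"
    using Y e by fastforce
  ultimately have "seg k \<lesssim> S \<times> seg l" unfolding lepoll_def by blast
  also have "S \<times> seg l \<lesssim> seg l \<times> seg l" using S(2) by (rule times_lepoll_mono) simp
  also have "seg l \<times> seg l \<approx> seg l" using l by (rule infinite_times_self_eqpoll)
  finally show False using K lepoll_antisym unfolding is_csucc_def lesspoll_def by blast
qed

subsection \<open>Maps that are the identity below l\<close>

definition inj_on_cofinal_subset :: "('o::wellorder \<Rightarrow> 'o) \<Rightarrow> 'o set \<Rightarrow> 'o \<Rightarrow> bool" where
  "inj_on_cofinal_subset h B a \<longleftrightarrow> (\<exists>B'\<subseteq>B. cofinal_in B' a \<and> inj_on h B')"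

definition id_below :: "'o::wellorder \<Rightarrow> ('o \<Rightarrow> 'o \<Rightarrow> 'o) \<Rightarrow> 'o \<Rightarrow> 'o \<Rightarrow> 'o" where
  "id_below l D \<eta> \<beta> = (if \<beta> < l then \<beta> else D \<eta> \<beta>)"

lemma is_map_id_below:
  assumes "\<And>\<eta> \<beta>. \<eta> < \<delta> \<Longrightarrow> l \<le> \<beta> \<Longrightarrow> \<beta> < k \<Longrightarrow> D \<eta> \<beta> < l"
  shows "is_map (id_below l D) \<delta> k l"
  unfolding is_map_def id_below_def using assms by (simp add: not_less)

text \<open>Ordinals a \<le> l are handled by the identity part of id_below l D; above l only
  the tails of cofinal sets matter.\<close>
lemma A_set_id_below:
  assumes l: "is_limit l" and a: "a < k" "is_limit a"
    and large: "\<And>B. l < a \<Longrightarrow> cofinal_in B a \<Longrightarrow> \<forall>\<beta>\<in>B. l \<le> \<beta> \<Longrightarrow>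
      \<exists>\<eta><cf l. inj_on_cofinal_subset (D \<eta>) B a"
  shows "a \<in> A_set (cf l) k (id_below l D)"
  unfolding A_set_def
proof (intro CollectI conjI allI impI)
  show "a < k" by (rule a(1))
next
  fix B assume B: "cofinal_in B a"
  show "\<exists>\<eta>. \<eta> < cf l \<and> \<eta> < a \<and> (\<exists>B'\<subseteq>B. cofinal_in B' a \<and> inj_on (id_below l D \<eta>) B')"
  proof (cases "a \<le> l")
    case True
    have "inj_on (id_below l D zero_ord) B"
      using B True cofinal_in_less unfolding id_below_def inj_on_def
      by (metis less_le_trans)
    moreover have "zero_ord < cf l"
      using limit_infinite_cf[OF l] by (rule infinite_seg_zero_ord_less)
    moreover have "zero_ord < a" using a(2) zero_ord_less unfolding is_limit_def by blast
    ultimately show ?thesis using B by blast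
  next
    case False
    then have "l < a" by simp
    let ?B1 = "{\<beta>\<in>B. l \<le> \<beta>}"
    obtain \<eta> B' where \<eta>: "\<eta> < cf l" and B': "B' \<subseteq> ?B1" "cofinal_in B' a" "inj_on (D \<eta>) B'"
      using large[OF \<open>l < a\<close> cofinal_in_tail[OF B \<open>l < a\<close>]]
      unfolding inj_on_cofinal_subset_def by auto
    have "id_below l D \<eta> \<beta> = D \<eta> \<beta>" if "\<beta> \<in> B'" for \<beta>
      using that B'(1) unfolding id_below_def by auto
    then have "inj_on (id_below l D \<eta>) B'" using B'(3) by (simp cong: inj_on_cong)
    moreover have "\<eta> < a" using \<eta> cf_le[of l] \<open>l < a\<close> by simp
    ultimately show ?thesis using \<eta> B' by blast
  qed
qed

subsection \<open>Ordinals of small cofinality\<close>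

text \<open>Pairs from a cofinal set of size cf a < cf l are fewer than cf l, so a single
  coordinate beyond all their separating indices separates every pair.\<close>
lemma eventually_different_inj_cofinal:
  assumes diff: "\<And>\<gamma> \<beta>. \<gamma> \<in> B \<Longrightarrow> \<beta> \<in> B \<Longrightarrow> \<gamma> < \<beta> \<Longrightarrow>
      on_tail (cf l) (\<lambda>j. G \<beta> j \<noteq> G \<gamma> j)"
    and a: "is_limit a" "cf a < cf l" and B: "cofinal_in B a"
  shows "\<exists>\<eta><cf l. inj_on_cofinal_subset (\<lambda>\<beta>. G \<beta> \<eta>) B a"
proof -
  obtain C where C: "C \<subseteq> B" "cofinal_in C a" "C \<approx> seg (cf a)"
    using cofinal_in_subset_eqpoll_cf[OF B] by blast
  define P where "P = {(\<beta>, \<gamma>). \<beta> \<in> C \<and> \<gamma> \<in> C \<and> \<gamma> < \<beta>}"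
  have "\<forall>p\<in>P. \<exists>i<cf l. \<forall>j. i \<le> j \<and> j < cf l \<longrightarrow> G (fst p) j \<noteq> G (snd p) j"
    using diff C(1) unfolding P_def on_tail_def by auto
  then obtain ind where ind: "\<And>p. p \<in> P \<Longrightarrow> ind p < cf l \<and>
      (\<forall>j. ind p \<le> j \<and> j < cf l \<longrightarrow> G (fst p) j \<noteq> G (snd p) j)"
    by metis
  have "ind ` P \<lesssim> P" by (rule image_lepoll)
  also have "P \<lesssim> C \<times> C" unfolding P_def by (rule subset_imp_lepoll) auto
  also have "C \<times> C \<approx> C"
    using infinite_times_self_eqpoll cofinal_in_limit_infinite[OF a(1) C(2)] .
  also have "C \<approx> seg (cf a)" by (rule C(3))
  also have "seg (cf a) \<prec> seg (cf (cf l))" using is_card_lesspoll[OF is_card_cf a(2)] by simp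
  finally have "ind ` P \<prec> seg (cf (cf l))" .
  moreover have "ind ` P \<subseteq> seg (cf l)" using ind by auto
  ultimately obtain \<eta> where \<eta>: "\<eta> < cf l" "\<forall>p\<in>P. ind p < \<eta>"
    using lesspoll_cf_bounded[of "ind ` P" "cf l"] by auto
  have "G \<beta> \<eta> \<noteq> G \<gamma> \<eta>" if "\<beta> \<in> C" "\<gamma> \<in> C" "\<gamma> < \<beta>" for \<beta> \<gamma>
  proof -
    have "(\<beta>, \<gamma>) \<in> P" using that unfolding P_def by simp
    then show ?thesis using ind \<eta> by (metis fst_conv snd_conv less_imp_le)
  qed
  then have "inj_on (\<lambda>\<beta>. G \<beta> \<eta>) C" by (metis inj_onI linorder_neqE)
  then show ?thesis using \<eta>(1) C unfolding inj_on_cofinal_subset_def by blast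
qed

definition avoiding_fun :: "'o::wellorder \<Rightarrow> ('o \<Rightarrow> 'o) \<Rightarrow> ('o \<Rightarrow> 'o \<Rightarrow> 'o) \<Rightarrow> 'o \<Rightarrow> 'o \<Rightarrow> 'o" where
  "avoiding_fun l b e = wfrec {(x, y). x < y}
     (\<lambda>G \<beta> j. LEAST v. v < l \<and> v \<notin> {G \<gamma> j |\<gamma>. \<gamma> < \<beta> \<and> e \<beta> \<gamma> < b j})"

lemma avoiding_fun_eq:
  "avoiding_fun l b e \<beta> j =
     (LEAST v. v < l \<and> v \<notin> {avoiding_fun l b e \<gamma> j |\<gamma>. \<gamma> < \<beta> \<and> e \<beta> \<gamma> < b j})"
proof -
  have "avoiding_fun l b e \<beta> = (\<lambda>j. LEAST v. v < l \<and>
      v \<notin> {cut (avoiding_fun l b e) {(x, y). x < y} \<beta> \<gamma> j |\<gamma>. \<gamma> < \<beta> \<and> e \<beta> \<gamma> < b j})"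
    unfolding avoiding_fun_def by (subst wfrec[OF wf]) (rule refl)
  moreover have "{cut (avoiding_fun l b e) {(x, y). x < y} \<beta> \<gamma> j |\<gamma>. \<gamma> < \<beta> \<and> e \<beta> \<gamma> < b j}
      = {avoiding_fun l b e \<gamma> j |\<gamma>. \<gamma> < \<beta> \<and> e \<beta> \<gamma> < b j}"
    by (auto simp: cut_def)
  ultimately show ?thesis by (simp only:)
qed

text \<open>Since e \<beta> is injective into l, fewer than l values have to be avoided.\<close>
lemma avoiding_fun_avoids:
  assumes l: "is_card l" "b j < l" and e: "inj_on (e \<beta>) (seg \<beta>)" "e \<beta> ` seg \<beta> \<subseteq> seg l"
  defines "G \<equiv> avoiding_fun l b e"
  shows "G \<beta> j < l \<and> G \<beta> j \<notin> {G \<gamma> j |\<gamma>. \<gamma> < \<beta> \<and> e \<beta> \<gamma> < b j}"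
proof -
  define T where "T = {\<gamma>. \<gamma> < \<beta> \<and> e \<beta> \<gamma> < b j}"
  have avoid: "{G \<gamma> j |\<gamma>. \<gamma> < \<beta> \<and> e \<beta> \<gamma> < b j} = (\<lambda>\<gamma>. G \<gamma> j) ` T"
    unfolding T_def by auto
  have "T \<subseteq> seg \<beta>" unfolding T_def by auto
  then have "inj_on (e \<beta>) T" by (rule inj_on_subset[OF e(1)])
  moreover have "e \<beta> ` T \<subseteq> seg (b j)" unfolding T_def by auto
  ultimately have "T \<lesssim> seg (b j)" unfolding lepoll_def by blast
  then have "(\<lambda>\<gamma>. G \<gamma> j) ` T \<lesssim> seg (b j)" by (rule lepoll_trans[OF image_lepoll])
  also have "seg (b j) \<prec> seg l" using is_card_lesspoll l by blast
  finally have small: "(\<lambda>\<gamma>. G \<gamma> j) ` T \<prec> seg l" .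
  have "\<not> seg l \<subseteq> (\<lambda>\<gamma>. G \<gamma> j) ` T"
  proof
    assume "seg l \<subseteq> (\<lambda>\<gamma>. G \<gamma> j) ` T"
    then have "seg l \<lesssim> (\<lambda>\<gamma>. G \<gamma> j) ` T" by (rule subset_imp_lepoll)
    then show False using small lepoll_antisym unfolding lesspoll_def by blast
  qed
  then have "\<exists>v. v < l \<and> v \<notin> (\<lambda>\<gamma>. G \<gamma> j) ` T" by auto
  then show ?thesis
    unfolding avoid G_def avoiding_fun_eq[of l b e \<beta> j] unfolding G_def[symmetric] avoid
    by (rule LeastI_ex)
qed

text \<open>For \<gamma> < \<beta>, the value at (\<beta>, j) avoids the one at (\<gamma>, j) as soon as
  e \<beta> \<gamma> < b j, which holds for all large j as b is a dominating sequence.\<close>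
lemma exists_eventually_different:
  assumes L: "inf_card l" and K: "is_csucc l k"
  shows "\<exists>G. (\<forall>\<beta><k. \<forall>j<cf l. G \<beta> j < l) \<and>
    (\<forall>\<gamma> \<beta>. \<gamma> < \<beta> \<and> \<beta> < k \<longrightarrow> on_tail (cf l) (\<lambda>j. G \<beta> j \<noteq> G \<gamma> j))"
proof -
  obtain b where b: "\<forall>j<cf l. b j < l" "\<forall>x<l. on_tail (cf l) (\<lambda>j. x < b j)"
    using dominating_sequence[OF inf_card_is_limit[OF L]] by blast
  have "\<forall>\<beta><k. \<exists>e. inj_on e (seg \<beta>) \<and> e ` seg \<beta> \<subseteq> seg l"
    using csucc_lepoll[OF K] unfolding lepoll_def by blast
  then obtain e where e: "\<And>\<beta>. \<beta> < k \<Longrightarrow> inj_on (e \<beta>) (seg \<beta>) \<and> e \<beta> ` seg \<beta> \<subseteq> seg l"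
    by metis
  define G where "G = avoiding_fun l b e"
  have G: "G \<beta> j < l \<and> G \<beta> j \<notin> {G \<gamma> j |\<gamma>. \<gamma> < \<beta> \<and> e \<beta> \<gamma> < b j}"
    if "\<beta> < k" "j < cf l" for \<beta> j
    unfolding G_def
  proof (rule avoiding_fun_avoids)
    show "is_card l" using L unfolding inf_card_def by simp
  qed (use e[OF that(1)] b(1) that(2) in auto)
  have "on_tail (cf l) (\<lambda>j. G \<beta> j \<noteq> G \<gamma> j)" if "\<gamma> < \<beta>" "\<beta> < k" for \<gamma> \<beta>
  proof -
    have "e \<beta> \<gamma> < l" using e[OF \<open>\<beta> < k\<close>] \<open>\<gamma> < \<beta>\<close> by (auto simp: image_subset_iff)
    then have "on_tail (cf l) (\<lambda>j. e \<beta> \<gamma> < b j)" using b(2) by blast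
    moreover have "G \<beta> j \<noteq> G \<gamma> j" if "j < cf l" "e \<beta> \<gamma> < b j" for j
      using G[OF \<open>\<beta> < k\<close> \<open>j < cf l\<close>] \<open>\<gamma> < \<beta>\<close> that(2) by blast
    ultimately show ?thesis by (rule on_tail_mono)
  qed
  then show ?thesis using G by blast
qed

lemma exists_map_E_less_subset_A_set:
  assumes L: "inf_card l" and K: "is_csucc l k"
  shows "\<exists>d. is_map d (cf l) k l \<and> E_less k (cf l) \<subseteq> A_set (cf l) k d"
proof -
  obtain G where G_less: "\<forall>\<beta><k. \<forall>j<cf l. G \<beta> j < l"
    and G_diff: "\<forall>\<gamma> \<beta>. \<gamma> < \<beta> \<and> \<beta> < k \<longrightarrow> on_tail (cf l) (\<lambda>j. G \<beta> j \<noteq> G \<gamma> j)"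
    using exists_eventually_different[OF L K] by blast
  define d where "d = id_below l (\<lambda>\<eta> \<beta>. G \<beta> \<eta>)"
  have "is_map d (cf l) k l" unfolding d_def using G_less by (intro is_map_id_below) auto
  moreover have "a \<in> A_set (cf l) k d" if "a \<in> E_less k (cf l)" for a
    unfolding d_def
  proof (rule A_set_id_below[OF inf_card_is_limit[OF L]])
    show "a < k" "is_limit a" using that unfolding E_less_def by auto
    fix B assume "cofinal_in B a"
    moreover have "\<forall>\<beta>\<in>B. \<beta> < k" using \<open>a < k\<close> \<open>cofinal_in B a\<close> cofinal_in_less by fastforce
    ultimately show "\<exists>\<eta><cf l. inj_on_cofinal_subset (\<lambda>\<beta>. G \<beta> \<eta>) B a"
      using eventually_different_inj_cofinal[of B l G a] G_diff \<open>is_limit a\<close> that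
      unfolding E_less_def by auto
  qed
  ultimately show ?thesis by blast
qed

subsection \<open>Almost disjoint sequences\<close>

text \<open>Choose D \<eta> \<beta> in A \<beta> above b \<eta>. By cofinality mismatch one coordinate \<eta> has
  b \<eta> above f \<beta> for cofinally many \<beta>, and there D \<eta> picks from pairwise disjoint tails.\<close>
lemma disjoint_tails_inj_cofinal:
  assumes b: "\<forall>x<l. on_tail (cf l) (\<lambda>j. x < b j)"
    and f: "\<forall>\<beta><a. f \<beta> < l"
    and disj: "\<forall>\<beta><a. \<forall>\<gamma><a. \<beta> \<noteq> \<gamma> \<longrightarrow> (A \<beta> - seg (f \<beta>)) \<inter> (A \<gamma> - seg (f \<gamma>)) = {}"
    and D: "\<And>\<eta> \<beta>. \<eta> < cf l \<Longrightarrow> \<beta> < a \<Longrightarrow> D \<eta> \<beta> \<in> A \<beta> \<and> b \<eta> \<le> D \<eta> \<beta>"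
    and ne: "cf a \<noteq> cf l" and B: "cofinal_in B a"
  shows "\<exists>\<eta><cf l. inj_on_cofinal_subset (D \<eta>) B a"
proof -
  have "on_tail (cf l) (\<lambda>j. f \<beta> < b j)" if "\<beta> \<in> B" for \<beta>
    using b f B cofinal_in_less that by blast
  then have "\<forall>\<beta>\<in>B. \<exists>i. i < cf l \<and> (\<forall>j. i \<le> j \<and> j < cf l \<longrightarrow> f \<beta> < b j)"
    unfolding on_tail_def by blast
  then obtain g where g: "\<And>\<beta>. \<beta> \<in> B \<Longrightarrow> g \<beta> < cf l \<and> (\<forall>j. g \<beta> \<le> j \<and> j < cf l \<longrightarrow> f \<beta> < b j)"
    by metis
  then obtain \<eta> X where \<eta>: "\<eta> < cf l" and X: "X \<subseteq> B" "cofinal_in X a" "\<forall>\<beta>\<in>X. g \<beta> \<le> \<eta>"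
    using cofinal_subset_bounded_colour[OF ne B, of g] by blast
  have tail: "D \<eta> \<beta> \<in> A \<beta> - seg (f \<beta>)" if "\<beta> \<in> X" for \<beta>
  proof -
    have "\<beta> < a" using X(2) that cofinal_in_less by blast
    then have "D \<eta> \<beta> \<in> A \<beta>" "b \<eta> \<le> D \<eta> \<beta>" using D \<eta> by auto
    moreover have "f \<beta> < b \<eta>" using g[of \<beta>] X that \<eta> by blast
    ultimately show ?thesis by auto
  qed
  have "inj_on (D \<eta>) X"
  proof (rule inj_onI, rule ccontr)
    fix \<beta> \<gamma> assume "\<beta> \<in> X" "\<gamma> \<in> X" "D \<eta> \<beta> = D \<eta> \<gamma>" "\<beta> \<noteq> \<gamma>"
    moreover have "\<beta> < a" "\<gamma> < a" using X(2) \<open>\<beta> \<in> X\<close> \<open>\<gamma> \<in> X\<close> cofinal_in_less by auto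
    ultimately have "(A \<beta> - seg (f \<beta>)) \<inter> (A \<gamma> - seg (f \<gamma>)) = {}" using disj by blast
    then show False using tail \<open>\<beta> \<in> X\<close> \<open>\<gamma> \<in> X\<close> \<open>D \<eta> \<beta> = D \<eta> \<gamma>\<close> by (metis disjoint_iff)
  qed
  then show ?thesis using \<eta> X unfolding inj_on_cofinal_subset_def by blast
qed

lemma ADS_imp_exists_map_E_neq_subset_A_set:
  assumes L: "inf_card l" and ADS: "ADS l k"
  shows "\<exists>d. is_map d (cf l) k l \<and> E_neq k (cf l) \<subseteq> A_set (cf l) k d"
proof -
  obtain A where A_cofinal: "\<forall>\<beta><k. cofinal_in (A \<beta>) l" and
    A_ads: "\<forall>a<k. \<exists>f. (\<forall>\<beta><a. f \<beta> < l) \<and>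
        (\<forall>\<beta><a. \<forall>\<gamma><a. \<beta> \<noteq> \<gamma> \<longrightarrow> (A \<beta> - seg (f \<beta>)) \<inter> (A \<gamma> - seg (f \<gamma>)) = {})"
    using ADS unfolding ADS_def by blast
  obtain b where b: "\<forall>j<cf l. b j < l" "\<forall>x<l. on_tail (cf l) (\<lambda>j. x < b j)"
    using dominating_sequence[OF inf_card_is_limit[OF L]] by blast
  define D where "D \<eta> \<beta> = (LEAST v. v \<in> A \<beta> \<and> b \<eta> \<le> v)" for \<eta> \<beta>
  have D: "D \<eta> \<beta> \<in> A \<beta> \<and> b \<eta> \<le> D \<eta> \<beta>" if "\<beta> < k" "\<eta> < cf l" for \<eta> \<beta>
  proof -
    have "\<exists>v. v \<in> A \<beta> \<and> b \<eta> \<le> v" using A_cofinal b(1) that unfolding cofinal_in_def by blast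
    then show ?thesis unfolding D_def by (rule LeastI_ex)
  qed
  have "D \<eta> \<beta> < l" if "\<eta> < cf l" "\<beta> < k" for \<eta> \<beta>
    using D[OF that(2,1)] A_cofinal that(2) cofinal_in_less by blast
  then have "is_map (id_below l D) (cf l) k l" by (intro is_map_id_below)
  moreover have "a \<in> A_set (cf l) k (id_below l D)" if "a \<in> E_neq k (cf l)" for a
  proof (rule A_set_id_below[OF inf_card_is_limit[OF L]])
    show "a < k" "is_limit a" using that unfolding E_neq_def by auto
    obtain f where f: "\<forall>\<beta><a. f \<beta> < l"
      "\<forall>\<beta><a. \<forall>\<gamma><a. \<beta> \<noteq> \<gamma> \<longrightarrow> (A \<beta> - seg (f \<beta>)) \<inter> (A \<gamma> - seg (f \<gamma>)) = {}"
      using A_ads \<open>a < k\<close> by blast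
    fix B assume "cofinal_in B a"
    moreover have "D \<eta> \<beta> \<in> A \<beta> \<and> b \<eta> \<le> D \<eta> \<beta>" if "\<eta> < cf l" "\<beta> < a" for \<eta> \<beta>
      using D \<open>a < k\<close> that by simp
    moreover have "cf a \<noteq> cf l" using \<open>a \<in> E_neq k (cf l)\<close> unfolding E_neq_def by simp
    ultimately show "\<exists>\<eta><cf l. inj_on_cofinal_subset (D \<eta>) B a"
      using disjoint_tails_inj_cofinal[OF b(2) f] by blast
  qed
  ultimately show ?thesis by blast
qed

subsection \<open>Good points of scales\<close>

definition least_above :: "'o::wellorder set \<Rightarrow> 'o \<Rightarrow> 'o" where
  "least_above V \<beta> = (LEAST v. v \<in> V \<and> \<beta> \<le> v)"

lemma least_above:
  assumes "cofinal_in V a" and "\<beta> < a"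
  shows "least_above V \<beta> \<in> V \<and> \<beta> \<le> least_above V \<beta>"
proof -
  have "\<exists>v. v \<in> V \<and> \<beta> \<le> v" using assms unfolding cofinal_in_def by blast
  then show ?thesis unfolding least_above_def by (rule LeastI_ex)
qed

lemma least_above_le: "v \<in> V \<Longrightarrow> \<beta> \<le> v \<Longrightarrow> least_above V \<beta> \<le> v"
  unfolding least_above_def by (simp add: Least_le)

definition separated :: "'o::wellorder set \<Rightarrow> 'o set \<Rightarrow> 'o set" where
  "separated B V = {\<beta>\<in>B. \<exists>v\<in>V. v < \<beta> \<and> (\<forall>\<beta>'\<in>B. \<beta>' < \<beta> \<longrightarrow> \<beta>' \<le> v)}"

lemma cofinal_in_separated:
  assumes a: "is_limit a" and B: "cofinal_in B a" and V: "cofinal_in V a"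
  shows "cofinal_in (separated B V) a"
  unfolding cofinal_in_def
proof (intro conjI allI impI)
  show "separated B V \<subseteq> seg a" using B cofinal_in_less unfolding separated_def by auto
next
  fix x assume "x < a"
  then obtain v where v: "v \<in> V" "x \<le> v" using V unfolding cofinal_in_def by blast
  then obtain y where "y < a" "v < y"
    using a V cofinal_in_less unfolding is_limit_def by blast
  then have "\<exists>\<beta>. \<beta> \<in> B \<and> v < \<beta>"
    using B unfolding cofinal_in_def by (meson less_le_trans)
  define \<beta> where "\<beta> = (LEAST \<beta>. \<beta> \<in> B \<and> v < \<beta>)"
  have \<beta>: "\<beta> \<in> B \<and> v < \<beta>" unfolding \<beta>_def using \<open>\<exists>\<beta>. \<beta> \<in> B \<and> v < \<beta>\<close> by (rule LeastI_ex)
  have "\<beta>' \<le> v" if "\<beta>' \<in> B" "\<beta>' < \<beta>" for \<beta>'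
    using not_less_Least[OF that(2)[unfolded \<beta>_def]] that(1) by (simp add: not_less)
  then have "\<beta> \<in> separated B V" using \<beta> v(1) unfolding separated_def by blast
  moreover have "x \<le> \<beta>" using \<beta> v(2) by (meson less_imp_le order_trans)
  ultimately show "\<exists>y\<in>separated B V. x \<le> y" by blast
qed

lemma separated_on_tail:
  fixes f :: "'a::wellorder \<Rightarrow> 'b::wellorder \<Rightarrow> 'c::order"
  assumes f_incr: "\<And>\<gamma> \<beta>. \<gamma> < \<beta> \<Longrightarrow> \<beta> < a \<Longrightarrow> on_tail \<mu> (\<lambda>j. f \<gamma> j < f \<beta> j)"
    and V: "cofinal_in V a" and \<beta>: "\<beta> \<in> separated B V" "\<beta> < a"
  shows "\<exists>v\<in>V. v < \<beta> \<and> (\<forall>\<beta>'\<in>B. \<beta>' < \<beta> \<longrightarrow> \<beta>' \<le> v) \<and>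
    on_tail \<mu> (\<lambda>j. f \<beta> j \<le> f (least_above V \<beta>) j \<and> f v j < f \<beta> j)"
proof -
  obtain v where v: "v \<in> V" "v < \<beta>" "\<forall>\<beta>'\<in>B. \<beta>' < \<beta> \<longrightarrow> \<beta>' \<le> v"
    using \<beta>(1) unfolding separated_def by blast
  have below: "on_tail \<mu> (\<lambda>j. f v j < f \<beta> j)" using f_incr v(2) \<beta>(2) by blast
  have "on_tail \<mu> (\<lambda>j. f \<beta> j \<le> f (least_above V \<beta>) j)"
  proof (cases "\<beta> = least_above V \<beta>")
    case True
    show ?thesis using True[symmetric] by (intro on_tail_mono[OF below]) simp
  next
    case False
    then have "\<beta> < least_above V \<beta>" using least_above[OF V \<beta>(2)] by (simp add: le_less)
    moreover have "least_above V \<beta> < a" using least_above[OF V \<beta>(2)] V cofinal_in_less by blast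
    ultimately have "on_tail \<mu> (\<lambda>j. f \<beta> j < f (least_above V \<beta>) j)" by (rule f_incr)
    then show ?thesis by (rule on_tail_mono) simp
  qed
  then show ?thesis using on_tail_conj[OF _ below] v by blast
qed

text \<open>Thin B to its separated elements \<beta>, with separating v \<beta> \<in> V, and then to a
  cofinal set on which, from a common coordinate \<eta> on, f \<beta> lies above f (v \<beta>) and below
  f at the least element of V above \<beta>. Along V the functions increase from i0 on, so
  f \<gamma> \<eta> < f \<beta> \<eta> whenever \<gamma> < \<beta> there.\<close>
lemma increasing_cofinal_inj_cofinal:
  assumes f_incr: "\<And>\<gamma> \<beta>. \<gamma> < \<beta> \<Longrightarrow> \<beta> < a \<Longrightarrow> on_tail (cf l) (\<lambda>j. f \<gamma> j < f \<beta> j)"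
    and V: "cofinal_in V a" and i0: "i0 < cf l"
    and V_incr: "\<forall>\<gamma>\<in>V. \<forall>\<beta>\<in>V. \<gamma> < \<beta> \<longrightarrow> (\<forall>j. i0 \<le> j \<and> j < cf l \<longrightarrow> f \<gamma> j < f \<beta> j)"
    and a: "is_limit a" "cf a \<noteq> cf l" and B: "cofinal_in B a"
  shows "\<exists>\<eta><cf l. inj_on_cofinal_subset (\<lambda>\<beta>. f \<beta> \<eta>) B a"
proof -
  let ?up = "least_above V"
  define X where "X = separated B V"
  have X: "cofinal_in X a" unfolding X_def by (rule cofinal_in_separated[OF a(1) B V])
  have X_less: "\<beta> < a" if "\<beta> \<in> X" for \<beta> using X that cofinal_in_less by blast
  have "\<exists>v i. v \<in> V \<and> v < \<beta> \<and> (\<forall>\<beta>'\<in>B. \<beta>' < \<beta> \<longrightarrow> \<beta>' \<le> v) \<and> i < cf l \<and>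
      (\<forall>j. i \<le> j \<and> j < cf l \<longrightarrow> f \<beta> j \<le> f (?up \<beta>) j \<and> f v j < f \<beta> j)" if "\<beta> \<in> X" for \<beta>
    using separated_on_tail[where f = f, OF f_incr V that[unfolded X_def] X_less[OF that]]
    unfolding on_tail_def by blast
  then obtain sep g where sep: "\<And>\<beta>. \<beta> \<in> X \<Longrightarrow>
      sep \<beta> \<in> V \<and> (\<forall>\<beta>'\<in>B. \<beta>' < \<beta> \<longrightarrow> \<beta>' \<le> sep \<beta>) \<and> g \<beta> < cf l \<and>
      (\<forall>j. g \<beta> \<le> j \<and> j < cf l \<longrightarrow> f \<beta> j \<le> f (?up \<beta>) j \<and> f (sep \<beta>) j < f \<beta> j)"
    by metis
  then obtain j1 X' where j1: "j1 < cf l" and X': "X' \<subseteq> X" "cofinal_in X' a" "\<forall>\<beta>\<in>X'. g \<beta> \<le> j1"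
    using cofinal_subset_bounded_colour[OF a(2) X, of g] by blast
  define \<eta> where "\<eta> = max i0 j1"
  have \<eta>: "\<eta> < cf l" "i0 \<le> \<eta>" "j1 \<le> \<eta>" unfolding \<eta>_def using i0 j1 by auto
  have at_\<eta>: "f \<delta> \<eta> \<le> f (?up \<delta>) \<eta> \<and> f (sep \<delta>) \<eta> < f \<delta> \<eta>" if "\<delta> \<in> X'" for \<delta>
  proof -
    have "\<delta> \<in> X" using X'(1) that by blast
    moreover have "g \<delta> \<le> \<eta>" using X'(3) that \<eta>(3) by (meson order_trans)
    ultimately show ?thesis using sep \<eta>(1) by blast
  qed
  have "strict_mono_on X' (\<lambda>\<beta>. f \<beta> \<eta>)"
  proof (rule strict_mono_onI)
    fix \<gamma> \<beta> assume "\<gamma> \<in> X'" "\<beta> \<in> X'" "\<gamma> < \<beta>"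
    then have "\<gamma> \<in> X" "\<beta> \<in> X" using X'(1) by auto
    then have "\<gamma> \<le> sep \<beta>" using sep \<open>\<gamma> < \<beta>\<close> unfolding X_def separated_def by blast
    then have "?up \<gamma> \<le> sep \<beta>" using least_above_le sep[OF \<open>\<beta> \<in> X\<close>] by blast
    have "f (?up \<gamma>) \<eta> \<le> f (sep \<beta>) \<eta>"
    proof (cases "?up \<gamma> = sep \<beta>")
      case False
      then have "?up \<gamma> < sep \<beta>" using \<open>?up \<gamma> \<le> sep \<beta>\<close> by simp
      moreover have "?up \<gamma> \<in> V" "sep \<beta> \<in> V"
        using least_above[OF V] X_less sep \<open>\<gamma> \<in> X\<close> \<open>\<beta> \<in> X\<close> by auto
      ultimately show ?thesis using V_incr \<eta> by (blast intro: less_imp_le)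
    qed simp
    then show "f \<gamma> \<eta> < f \<beta> \<eta>"
      using at_\<eta>[OF \<open>\<gamma> \<in> X'\<close>] at_\<eta>[OF \<open>\<beta> \<in> X'\<close>] by (meson le_less_trans order_trans)
  qed
  then have "inj_on (\<lambda>\<beta>. f \<beta> \<eta>) X'" by (rule strict_mono_on_imp_inj_on)
  moreover have "X' \<subseteq> B" using X'(1) unfolding X_def separated_def by auto
  ultimately show ?thesis using \<eta>(1) X'(2) unfolding inj_on_cofinal_subset_def by blast
qed

lemma scale_imp_exists_map_G_set_subset_A_set:
  assumes L: "inf_card l" and S: "is_scale l k f"
  shows "\<exists>d. is_map d (cf l) k l \<and> G_set l k f \<subseteq> A_set (cf l) k d"
proof -
  obtain ls where ls: "\<forall>i<cf l. regular_card (ls i) \<and> ls i < l"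
    and f_bound: "\<forall>\<beta><k. \<forall>i<cf l. f \<beta> i < ls i"
    and f_incr: "\<forall>\<beta><k. \<forall>\<gamma><k. \<beta> < \<gamma> \<longrightarrow> (\<exists>i<cf l. \<forall>j. i \<le> j \<and> j < cf l \<longrightarrow> f \<beta> j < f \<gamma> j)"
    using S unfolding is_scale_def by blast
  define d where "d = id_below l (\<lambda>\<eta> \<beta>. f \<beta> \<eta>)"
  have "f \<beta> \<eta> < l" if "\<eta> < cf l" "\<beta> < k" for \<eta> \<beta>
    using f_bound ls that by (meson less_trans)
  then have "is_map d (cf l) k l" unfolding d_def by (intro is_map_id_below)
  moreover have "a \<in> A_set (cf l) k d" if a: "a \<in> G_set l k f" for a
    unfolding d_def
  proof (rule A_set_id_below[OF inf_card_is_limit[OF L]])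
    show "a < k" "is_limit a" using a unfolding G_set_def E_neq_def by auto
    have "cf a \<noteq> cf l" using a unfolding G_set_def E_neq_def by auto
    obtain V i0 where V: "cofinal_in V a" "i0 < cf l"
      "\<forall>\<gamma>\<in>V. \<forall>\<beta>\<in>V. \<gamma> < \<beta> \<longrightarrow> (\<forall>j. i0 \<le> j \<and> j < cf l \<longrightarrow> f \<gamma> j < f \<beta> j)"
      using a unfolding G_set_def by auto
    have incr_below_a: "on_tail (cf l) (\<lambda>j. f \<gamma> j < f \<beta> j)" if "\<gamma> < \<beta>" "\<beta> < a" for \<gamma> \<beta>
      using f_incr that \<open>a < k\<close> unfolding on_tail_def by (meson less_trans)
    fix B assume "cofinal_in B a"
    then show "\<exists>\<eta><cf l. inj_on_cofinal_subset (\<lambda>\<beta>. f \<beta> \<eta>) B a"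
      using increasing_cofinal_inj_cofinal[OF incr_below_a V \<open>is_limit a\<close> \<open>cf a \<noteq> cf l\<close>] by blast
  qed
  ultimately show ?thesis by blast
qed

subsection \<open>Chang's conjecture\<close>

lemma is_omega_countable:
  assumes "is_omega w"
  shows "countable (seg w)"
proof -
  have "strict_mono_on (seg w) (\<lambda>c. card (seg c))"
  proof (rule strict_mono_onI)
    fix x y assume "x \<in> seg w" "y \<in> seg w" "x < y"
    then have "seg x \<subset> seg y" "finite (seg y)"
      using assms unfolding is_omega_def seg_def by auto
    then show "card (seg x) < card (seg y)" by (rule psubset_card_mono[rotated])
  qed
  then show ?thesis unfolding countable_def using strict_mono_on_imp_inj_on by blast
qed

lemma csucc_omega_countable:
  assumes "is_omega w" and "is_csucc w a1" and "c < a1"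
  shows "countable (seg c)"
  using countable_lepoll[OF is_omega_countable[OF assms(1)]] csucc_lepoll assms(2,3) by blast

lemma csucc_omega_uncountable:
  assumes W: "is_omega w" and A1: "is_csucc w a1"
  shows "\<not> countable (seg a1)"
proof
  assume "countable (seg a1)"
  then have "seg a1 \<lesssim> (UNIV :: nat set)" unfolding countable_def lepoll_def by blast
  also have "(UNIV :: nat set) \<lesssim> seg w" using W infinite_le_lepoll unfolding is_omega_def by blast
  finally show False using A1 lepoll_antisym unfolding is_csucc_def lesspoll_def by blast
qed

lemma aleph_omega_infinite:
  assumes "is_aleph_omega m"
  shows "infinite (seg m)"
proof -
  have "{b. b < m \<and> inf_card b} \<noteq> {}"
    using assms infinite_imp_nonempty unfolding is_aleph_omega_def by blast
  then obtain b where "b < m" "infinite (seg b)" unfolding inf_card_def by blast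
  moreover have "seg b \<subseteq> seg m" using \<open>b < m\<close> by (intro seg_mono) simp
  ultimately show ?thesis using finite_subset by blast
qed

lemma csucc_omega_le_aleph_omega:
  assumes M: "is_aleph_omega m" and W: "is_omega w" and A1: "is_csucc w a1"
  shows "a1 \<le> m"
proof -
  have "infinite ({b. b < m \<and> inf_card b} - {w})" using M unfolding is_aleph_omega_def by simp
  then obtain b where b: "b < m" "inf_card b" "b \<noteq> w" using infinite_imp_nonempty by blast
  have "\<not> b < w" using W b(2) unfolding is_omega_def inf_card_def by blast
  then have "w < b" using b(3) by simp
  have "a1 \<le> b"
  proof (rule ccontr)
    assume "\<not> a1 \<le> b"
    then have "seg b \<lesssim> seg w" using csucc_lepoll[OF A1] by simp
    moreover have "seg w \<lesssim> seg b" using \<open>w < b\<close> by (intro subset_imp_lepoll seg_mono) simp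
    ultimately have "seg w \<approx> seg b" using lepoll_antisym by blast
    then show False using b(2) \<open>w < b\<close> unfolding inf_card_def is_card_def by blast
  qed
  then show ?thesis using b(1) by simp
qed

lemma chang_closed_subset:
  fixes u :: "nat \<Rightarrow> 'o::wellorder \<Rightarrow> 'o" and v :: "'o \<Rightarrow> 'o \<Rightarrow> 'o"
  assumes "chang k m a1" and "seg k \<noteq> {}"
  shows "\<exists>M\<subseteq>seg k. M \<approx> seg a1 \<and> countable (M \<inter> seg m) \<and>
    (\<forall>n x. x \<in> M \<and> u n x < k \<longrightarrow> u n x \<in> M) \<and>
    (\<forall>x y. x \<in> M \<and> y \<in> M \<and> v x y < k \<longrightarrow> v x y \<in> M)"
proof -
  define raw where "raw n xs =
    (case (n, xs) of (0, [x, y]) \<Rightarrow> v x y | (Suc n, [x]) \<Rightarrow> u n x | _ \<Rightarrow> zero_ord)" for n xs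
  define F where "F n xs = (if raw n xs < k then raw n xs else zero_ord)" for n xs
  have "zero_ord < k" using assms(2) zero_ord_less by (metis ex_in_conv seg_iff)
  then have "is_structure (seg k) F" using assms(2) unfolding is_structure_def F_def by simp
  then obtain M where M: "elem_sub M (seg k) F (\<lambda>_ _. False)" "M \<approx> seg a1" "countable (M \<inter> seg m)"
    using assms(1) unfolding chang_def by blast
  have closed: "F n xs \<in> M" if "set xs \<subseteq> M" for n xs
    using M(1) that unfolding elem_sub_def is_structure_def by blast
  have "u n x \<in> M" if "x \<in> M" "u n x < k" for n x
    using closed[of "[x]" "Suc n"] that unfolding F_def raw_def by simp
  moreover have "v x y \<in> M" if "x \<in> M" "y \<in> M" "v x y < k" for x y
    using closed[of "[x, y]" 0] that unfolding F_def raw_def by simp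
  moreover have "M \<subseteq> seg k" using M(1) unfolding elem_sub_def by blast
  ultimately show ?thesis using M(2,3) by blast
qed

definition strict_sup :: "'o::wellorder set \<Rightarrow> 'o" where
  "strict_sup M = (LEAST \<alpha>. \<forall>y\<in>M. y < \<alpha>)"

lemma strict_sup:
  assumes "\<forall>y\<in>M. y < x"
  shows "\<forall>y\<in>M. y < strict_sup M" and "strict_sup M \<le> x" and "cofinal_in M (strict_sup M)"
proof -
  show upper: "\<forall>y\<in>M. y < strict_sup M" unfolding strict_sup_def using assms by (rule LeastI)
  show "strict_sup M \<le> x" unfolding strict_sup_def using assms by (rule Least_le)
  have "\<exists>y\<in>M. z \<le> y" if "z < strict_sup M" for z
    using not_less_Least[OF that[unfolded strict_sup_def]] by (auto simp: not_less)
  then show "cofinal_in M (strict_sup M)" using upper unfolding cofinal_in_def by auto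
qed

lemma cofinal_in_uncountable:
  assumes M: "\<not> countable M" "\<forall>y\<in>M. countable (M \<inter> seg y)" "cofinal_in M \<alpha>"
    and B: "cofinal_in B \<alpha>"
  shows "\<not> countable B"
proof
  assume "countable B"
  have "\<exists>y. y \<in> M \<and> b \<le> y" if "b \<in> B" for b
    using M(3) B that cofinal_in_less unfolding cofinal_in_def by blast
  then obtain s where s: "\<And>b. b \<in> B \<Longrightarrow> s b \<in> M \<and> b \<le> s b" by metis
  have "M \<subseteq> (\<Union>b\<in>B. insert (s b) (M \<inter> seg (s b)))"
  proof
    fix y assume "y \<in> M"
    then obtain b where "b \<in> B" "y \<le> b" using B M(3) cofinal_in_less unfolding cofinal_in_def by blast
    then have "y \<le> s b" using s by (meson order_trans)
    then show "y \<in> (\<Union>b\<in>B. insert (s b) (M \<inter> seg (s b)))"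
      using \<open>b \<in> B\<close> \<open>y \<in> M\<close> by (auto simp: le_less)
  qed
  moreover have "countable (\<Union>b\<in>B. insert (s b) (M \<inter> seg (s b)))"
    using \<open>countable B\<close> M(2) s by (intro countable_UN) auto
  ultimately show False using M(1) countable_subset by blast
qed

text \<open>A map d \<eta> injective on a cofinal subset of M would embed an uncountable set
  into the countable M \<inter> seg m.\<close>
lemma strict_sup_in_E_eq_minus_A_set:
  assumes M: "M \<approx> seg a1" "\<forall>y\<in>M. countable (M \<inter> seg y)" "\<forall>y\<in>M. y < x"
    and a1: "\<not> countable (seg a1)" "\<And>c. c < a1 \<Longrightarrow> countable (seg c)"
    and d: "\<And>\<eta> \<beta>. \<eta> < w \<Longrightarrow> \<beta> \<in> M \<Longrightarrow> d \<eta> \<beta> \<in> M \<inter> seg m" "countable (M \<inter> seg m)"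
    and "x < k"
  shows "strict_sup M \<in> E_eq k a1 - A_set w k d"
proof -
  let ?\<alpha> = "strict_sup M"
  have "\<not> countable M" using M(1) a1(1) countable_eqpoll eqpoll_sym by blast
  have cofinal: "cofinal_in M ?\<alpha>" using strict_sup(3)[OF M(3)] .
  have uncountable: "\<not> countable B" if "cofinal_in B ?\<alpha>" for B
    using cofinal_in_uncountable[OF \<open>\<not> countable M\<close> M(2) cofinal that] .
  obtain y0 where "y0 \<in> M" using \<open>\<not> countable M\<close> by (metis countable_empty ex_in_conv)
  then have "is_limit ?\<alpha>"
    using strict_sup(1)[OF M(3)] uncountable
    by (intro infinite_cofinal_is_limit[of y0]) (auto dest: countable_finite)
  moreover have "cf ?\<alpha> = a1"
  proof (rule antisym)
    show "cf ?\<alpha> \<le> a1" unfolding cf_def by (rule Least_le) (use cofinal M(1) in blast)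
    obtain B where "cofinal_in B ?\<alpha>" "B \<approx> seg (cf ?\<alpha>)" using cf_cofinal_eqpoll by blast
    then show "a1 \<le> cf ?\<alpha>" using uncountable a1(2) countable_eqpoll not_le by blast
  qed
  moreover have "?\<alpha> < k" using strict_sup(2)[OF M(3)] \<open>x < k\<close> by simp
  moreover have "?\<alpha> \<notin> A_set w k d"
  proof
    assume "?\<alpha> \<in> A_set w k d"
    then obtain \<eta> B' where "\<eta> < w" "B' \<subseteq> M" "cofinal_in B' ?\<alpha>" "inj_on (d \<eta>) B'"
      using cofinal unfolding A_set_def by blast
    moreover have "d \<eta> ` B' \<subseteq> M \<inter> seg m" using d(1) \<open>\<eta> < w\<close> \<open>B' \<subseteq> M\<close> by blast
    then have "countable (d \<eta> ` B')" using d(2) countable_subset by blast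
    ultimately show False using countable_image_inj_on uncountable by blast
  qed
  ultimately show ?thesis unfolding E_eq_def by blast
qed

lemma strict_sup_in_club:
  assumes C: "club k C" and M: "\<forall>y\<in>M. y < x" "strict_sup M < k" "is_limit (strict_sup M)"
    and next_in_C: "\<And>y. y \<in> M \<Longrightarrow> \<exists>z\<in>M \<inter> C. y < z"
  shows "strict_sup M \<in> C"
proof -
  have "cofinal_in (C \<inter> seg (strict_sup M)) (strict_sup M)"
    unfolding cofinal_in_def
  proof (intro conjI allI impI)
    show "C \<inter> seg (strict_sup M) \<subseteq> seg (strict_sup M)" by blast
  next
    fix z assume "z < strict_sup M"
    then obtain y where "y \<in> M" "z \<le> y" using strict_sup(3)[OF M(1)] unfolding cofinal_in_def by blast
    then obtain y' where "y' \<in> M \<inter> C" "y < y'" using next_in_C by blast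
    then show "\<exists>y\<in>C \<inter> seg (strict_sup M). z \<le> y"
      using strict_sup(1)[OF M(1)] \<open>z \<le> y\<close> by (meson IntD1 IntD2 IntI le_less_trans less_imp_le seg_iff)
  qed
  then show ?thesis using C M(2,3) unfolding club_def by blast
qed

lemma countable_initial_segment:
  assumes N: "countable (N \<inter> seg m)"
    and \<iota>: "inj_on \<iota> (seg y)" "\<iota> ` seg y \<subseteq> seg m"
    and closed: "\<And>x. x \<in> N \<Longrightarrow> x < y \<Longrightarrow> \<iota> x \<in> N"
  shows "countable (N \<inter> seg y)"
proof -
  have "\<iota> ` (N \<inter> seg y) \<subseteq> N \<inter> seg m" using \<iota>(2) closed by auto
  then have "countable (\<iota> ` (N \<inter> seg y))" using N countable_subset by blast
  moreover have "inj_on \<iota> (N \<inter> seg y)" using \<iota>(1) inj_on_subset[of \<iota> "seg y" "N \<inter> seg y"] by blast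
  ultimately show ?thesis by (rule countable_image_inj_on)
qed

text \<open>Close a Chang substructure N under a given successor function nx, under
  injections of each \<beta> < k into m and under the maps d \<eta>, coded by natural numbers.
  Closure under the injections makes the initial segments of N countable.\<close>
lemma chang_closed_bounded_subset:
  assumes M: "is_aleph_omega m" and K: "is_csucc m k" and W: "is_omega w" and A1: "is_csucc w a1"
    and CC: "chang k m a1" and D: "is_map d w k m" and nx: "\<And>x. x < k \<Longrightarrow> x < nx x \<and> nx x < k"
  shows "\<exists>N x. N \<approx> seg a1 \<and> countable (N \<inter> seg m) \<and> (\<forall>y\<in>N. countable (N \<inter> seg y)) \<and>
    x < k \<and> (\<forall>y\<in>N. y < x) \<and> (\<forall>y\<in>N. nx y \<in> N) \<and> (\<forall>\<eta><w. \<forall>y\<in>N. d \<eta> y \<in> N \<inter> seg m)"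
proof -
  have m: "infinite (seg m)" "m < k" using aleph_omega_infinite[OF M] csucc_less[OF K] by auto
  have "\<forall>y<k. \<exists>e. inj_on e (seg y) \<and> e ` seg y \<subseteq> seg m"
    using csucc_lepoll[OF K] unfolding lepoll_def by blast
  then obtain \<iota> where \<iota>: "\<And>y. y < k \<Longrightarrow> inj_on (\<iota> y) (seg y) \<and> \<iota> y ` seg y \<subseteq> seg m" by metis
  define en where "en = from_nat_into (seg w)"
  have en: "\<exists>n. en n = \<eta>" if "\<eta> < w" for \<eta>
    using from_nat_into_surj[OF is_omega_countable[OF W]] that unfolding en_def by simp
  obtain N where N: "N \<subseteq> seg k" "N \<approx> seg a1" "countable (N \<inter> seg m)"
    and N_u: "\<forall>n x. x \<in> N \<and> (case n of 0 \<Rightarrow> nx | Suc n \<Rightarrow> d (en n)) x < k \<longrightarrow>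
      (case n of 0 \<Rightarrow> nx | Suc n \<Rightarrow> d (en n)) x \<in> N"
    and N_\<iota>: "\<forall>y x. y \<in> N \<and> x \<in> N \<and> \<iota> y x < k \<longrightarrow> \<iota> y x \<in> N"
    using chang_closed_subset[OF CC, of "\<lambda>n. case n of 0 \<Rightarrow> nx | Suc n \<Rightarrow> d (en n)" \<iota>] m(2)
    by (metis ex_in_conv seg_iff)
  have N_less: "y < k" if "y \<in> N" for y using N(1) that by auto
  have N_nx: "nx y \<in> N" if "y \<in> N" for y
    using N_u[rule_format, of y 0] nx[OF N_less[OF that]] that by simp
  have N_d: "d \<eta> y \<in> N \<inter> seg m" if \<eta>: "\<eta> < w" and y: "y \<in> N" for \<eta> y
  proof -
    obtain n where "en n = \<eta>" using en \<eta> by blast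
    moreover have "d \<eta> y < m" using D \<eta> y N_less unfolding is_map_def by blast
    ultimately show ?thesis using N_u[rule_format, of y "Suc n"] y m(2) by auto
  qed
  have N_init: "countable (N \<inter> seg y)" if y: "y \<in> N" for y
  proof (rule countable_initial_segment[OF N(3)])
    show "inj_on (\<iota> y) (seg y)" "\<iota> y ` seg y \<subseteq> seg m" using \<iota>[OF N_less[OF y]] by auto
    show "\<iota> y x \<in> N" if "x \<in> N" "x < y" for x
    proof -
      have "\<iota> y x < m" using \<iota>[OF N_less[OF y]] that(2) by (auto simp: image_subset_iff)
      then show ?thesis using N_\<iota> that(1) y m(2) less_trans by blast
    qed
  qed
  have "N \<lesssim> seg a1" using N(2) by (rule eqpoll_imp_lepoll)
  also have "seg a1 \<lesssim> seg m"
    using csucc_omega_le_aleph_omega[OF M W A1] by (intro subset_imp_lepoll seg_mono)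
  finally obtain x where "x < k" "\<forall>y\<in>N. y < x" using csucc_bounded[OF m(1) K N(1)] by blast
  then show ?thesis using N(2,3) N_nx N_d N_init by (intro exI[of _ N] exI[of _ x]) auto
qed

text \<open>The required point is the supremum of the set N of the previous lemma, built
  with the successor function of the given club.\<close>
lemma chang_imp_stationary_E_eq_minus_A_set:
  assumes M: "is_aleph_omega m" and K: "is_csucc m k" and W: "is_omega w" and A1: "is_csucc w a1"
    and CC: "chang k m a1" and D: "is_map d w k m"
  shows "stationary k (E_eq k a1 - A_set w k d)"
  unfolding stationary_def
proof (intro conjI allI impI)
  show "E_eq k a1 - A_set w k d \<subseteq> seg k" unfolding E_eq_def by auto
next
  fix C assume C: "club k C"
  have "\<exists>z. z \<in> C \<and> x < z" if x: "x < k" for x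
  proof -
    obtain x' where "x < x'" "x' < k"
      using csucc_is_limit[OF aleph_omega_infinite[OF M] K] x unfolding is_limit_def by blast
    moreover obtain z where "z \<in> C" "x' \<le> z"
      using C \<open>x' < k\<close> unfolding club_def cofinal_in_def by blast
    ultimately show ?thesis using less_le_trans by blast
  qed
  then obtain nx where nx: "\<And>x. x < k \<Longrightarrow> nx x \<in> C \<and> x < nx x" by metis
  have nx_less: "x < nx x \<and> nx x < k" if "x < k" for x
    using nx[OF that] C cofinal_in_less unfolding club_def by blast
  obtain N x where N: "N \<approx> seg a1" "countable (N \<inter> seg m)" "\<forall>y\<in>N. countable (N \<inter> seg y)"
    and x: "x < k" "\<forall>y\<in>N. y < x"
    and N_nx: "\<forall>y\<in>N. nx y \<in> N" and N_d: "\<forall>\<eta><w. \<forall>y\<in>N. d \<eta> y \<in> N \<inter> seg m"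
    using chang_closed_bounded_subset[OF M K W A1 CC D nx_less] by blast
  have "strict_sup N \<in> E_eq k a1 - A_set w k d"
  proof (rule strict_sup_in_E_eq_minus_A_set[OF N(1,3) x(2)])
    show "\<not> countable (seg a1)" by (rule csucc_omega_uncountable[OF W A1])
    show "countable (seg c)" if "c < a1" for c using csucc_omega_countable[OF W A1 that] .
    show "d \<eta> \<beta> \<in> N \<inter> seg m" if "\<eta> < w" "\<beta> \<in> N" for \<eta> \<beta> using N_d that by blast
  qed (use N(2) x(1) in auto)
  moreover have "strict_sup N \<in> C"
  proof (rule strict_sup_in_club[OF C x(2)])
    show "strict_sup N < k" "is_limit (strict_sup N)" using calculation unfolding E_eq_def by auto
    show "\<exists>z\<in>N \<inter> C. y < z" if y: "y \<in> N" for y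
    proof -
      have "y < k" using x(2) y x(1) by (blast intro: less_trans)
      then show ?thesis using N_nx nx[OF \<open>y < k\<close>] y by blast
    qed
  qed
  ultimately show "(E_eq k a1 - A_set w k d) \<inter> C \<noteq> {}" by blast
qed

theorem proposition3p6:
  fixes dummy :: "'o::wellorder"
  shows "(\<forall>(l::'o) k. inf_card l \<and> is_csucc l k \<longrightarrow>
            (\<exists>d. is_map d (cf l) k l \<and> E_less k (cf l) \<subseteq> A_set (cf l) k d)
          \<and> (ADS l k \<longrightarrow>
            (\<exists>d. is_map d (cf l) k l \<and> E_neq k (cf l) \<subseteq> A_set (cf l) k d))
          \<and> (\<forall>f. singular_card l \<and> is_scale l k f \<longrightarrow>
            (\<exists>d. is_map d (cf l) k l \<and> G_set l k f \<subseteq> A_set (cf l) k d)))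
     \<and> (\<forall>(m::'o) k w a1. is_aleph_omega m \<and> is_csucc m k \<and> is_omega w \<and> is_csucc w a1
          \<and> chang k m a1 \<longrightarrow>
            (\<forall>d. is_map d w k m \<longrightarrow> stationary k (E_eq k a1 - A_set w k d)))"
proof (intro conjI allI impI)
  fix l k :: 'o
  assume "inf_card l \<and> is_csucc l k"
  then show "\<exists>d. is_map d (cf l) k l \<and> E_less k (cf l) \<subseteq> A_set (cf l) k d"
    using exists_map_E_less_subset_A_set by blast
next
  fix l k :: 'o
  assume "inf_card l \<and> is_csucc l k" and "ADS l k"
  then show "\<exists>d. is_map d (cf l) k l \<and> E_neq k (cf l) \<subseteq> A_set (cf l) k d"
    using ADS_imp_exists_map_E_neq_subset_A_set by blast
next
  fix l k :: 'o and f
  assume "inf_card l \<and> is_csucc l k" and "singular_card l \<and> is_scale l k f"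
  then show "\<exists>d. is_map d (cf l) k l \<and> G_set l k f \<subseteq> A_set (cf l) k d"
    using scale_imp_exists_map_G_set_subset_A_set by blast
next
  fix m k w a1 :: 'o and d
  assume "is_aleph_omega m \<and> is_csucc m k \<and> is_omega w \<and> is_csucc w a1 \<and> chang k m a1"
    and "is_map d w k m"
  then show "stationary k (E_eq k a1 - A_set w k d)"
    using chang_imp_stationary_E_eq_minus_A_set by blast
qed

end
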